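(* The identities (A9) $x\wedge(y\wedge z)\approx z\wedge(y\wedge x)$, (J4) $x''\approx x$, (J5) $x'\approx (x\wedge y)'\wedge(x\wedge y')'$ form a 3-base for the variety $\mathbb{BA}$ of Boolean algebras (in the language $\langle\wedge,{}'\rangle$).
   Context: Algebras are of type $\langle \wedge, {}'\rangle$ with $\wedge$ binary and ${}'$ unary. The variety $\mathbb{BA}$ of Boolean algebras in this language consists of the algebras $\langle B,\wedge,{}'\rangle$ obtained from Boolean algebras by keeping only meet and complement (equivalently, the variety generated by the two-element Boolean algebra with meet and complement). A base for a variety is an independent set of identities (no identity in the set follows from the others) that defines the variety; an $n$-base is a base with exactly $n$ identities. *)

theory Defs
  imports Main
begin

datatype trm = Var nat | Meet trm trm | Cmp trm

type_synonym identity = "trm \<times> trm"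

fun eval :: "('a \<Rightarrow> 'a \<Rightarrow> 'a) \<Rightarrow> ('a \<Rightarrow> 'a) \<Rightarrow> (nat \<Rightarrow> 'a) \<Rightarrow> trm \<Rightarrow> 'a" where
  "eval m c v (Var i) = v i"
| "eval m c v (Meet s t) = m (eval m c v s) (eval m c v t)"
| "eval m c v (Cmp s) = c (eval m c v s)"

definition algebra :: "'a set \<Rightarrow> ('a \<Rightarrow> 'a \<Rightarrow> 'a) \<Rightarrow> ('a \<Rightarrow> 'a) \<Rightarrow> bool" where
  "algebra A m c \<longleftrightarrow> A \<noteq> {} \<and> (\<forall>x\<in>A. \<forall>y\<in>A. m x y \<in> A) \<and> (\<forall>x\<in>A. c x \<in> A)"

definition sat :: "'a set \<Rightarrow> ('a \<Rightarrow> 'a \<Rightarrow> 'a) \<Rightarrow> ('a \<Rightarrow> 'a) \<Rightarrow> identity \<Rightarrow> bool" where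
  "sat A m c e \<longleftrightarrow> (\<forall>v. (\<forall>i. v i \<in> A) \<longrightarrow> eval m c v (fst e) = eval m c v (snd e))"

definition models :: "'a set \<Rightarrow> ('a \<Rightarrow> 'a \<Rightarrow> 'a) \<Rightarrow> ('a \<Rightarrow> 'a) \<Rightarrow> identity set \<Rightarrow> bool" where
  "models A m c \<Sigma> \<longleftrightarrow> (\<forall>e\<in>\<Sigma>. sat A m c e)"

text \<open>Membership in the variety BA = variety generated by the two-element Boolean
  algebra (bool, conjunction, negation) = models of its equational theory (Birkhoff).\<close>
definition in_BA :: "'a set \<Rightarrow> ('a \<Rightarrow> 'a \<Rightarrow> 'a) \<Rightarrow> ('a \<Rightarrow> 'a) \<Rightarrow> bool" where
  "in_BA A m c \<longleftrightarrow> algebra A m c \<and>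
     (\<forall>e. sat (UNIV :: bool set) (\<and>) Not e \<longrightarrow> sat A m c e)"

abbreviation "vx \<equiv> Var 0"
abbreviation "vy \<equiv> Var 1"
abbreviation "vz \<equiv> Var 2"

definition A9 :: identity where
  "A9 = (Meet vx (Meet vy vz), Meet vz (Meet vy vx))"
definition J4 :: identity where
  "J4 = (Cmp (Cmp vx), vx)"
definition J5 :: identity where
  "J5 = (Cmp vx, Meet (Cmp (Meet vx vy)) (Cmp (Meet vx (Cmp vy))))"

definition defines_BA :: "'a itself \<Rightarrow> identity set \<Rightarrow> bool" where
  "defines_BA _ \<Sigma> \<longleftrightarrow>
     (\<forall>(A::'a set) m c. algebra A m c \<longrightarrow> (models A m c \<Sigma> \<longleftrightarrow> in_BA A m c))"

definition independent :: "identity set \<Rightarrow> bool" where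
  "independent \<Sigma> \<longleftrightarrow>
     (\<forall>e\<in>\<Sigma>. \<exists>(B::nat set) m c. algebra B m c \<and> models B m c (\<Sigma> - {e}) \<and> \<not> sat B m c e)"

end

(*
  A9 with J4 and J5 yields commutativity of meet, and then associativity. From there on J5 is
  Huntington's axiom (dualised to meet and complement, with J4 as the involution law), which
  gives a constant bottom x \<sqinter> x', idempotence and absorption. Completeness is by Shannon
  expansion: every term equals v\<^sub>k \<sqinter> t[v\<^sub>k := 1] \<squnion> v\<^sub>k' \<sqinter> t[v\<^sub>k := 0], so an identity holds
  everywhere once it holds under all valuations into {0, 1}, where the algebra computes like
  the two-element Boolean algebra. Independence is witnessed by three two-element algebras.
*)
theory Submission
  imports Defs
begin

fun vars :: "trm \<Rightarrow> nat set" where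
  "vars (Var i) = {i}"
| "vars (Meet s t) = vars s \<union> vars t"
| "vars (Cmp t) = vars t"

lemma finite_vars: "finite (vars t)"
  by (induction t) simp_all

lemma eval_cong: "(\<And>i. i \<in> vars t \<Longrightarrow> v i = w i) \<Longrightarrow> eval m c v t = eval m c w t"
  by (induction t) simp_all

text \<open>The assumption huntington is Huntington's 1933 axiom n(n(x) + y) + n(n(x) + n(y)) = x,
  dualised to meet and with x replaced by its complement.\<close>
locale huntington_algebra =
  fixes A :: "'a set" and meet :: "'a \<Rightarrow> 'a \<Rightarrow> 'a" (infixl "\<sqinter>" 70) and compl :: "'a \<Rightarrow> 'a"
  assumes carrier_algebra: "algebra A (\<sqinter>) compl"
    and meet_comm: "x \<in> A \<Longrightarrow> y \<in> A \<Longrightarrow> x \<sqinter> y = y \<sqinter> x"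
    and meet_assoc: "x \<in> A \<Longrightarrow> y \<in> A \<Longrightarrow> z \<in> A \<Longrightarrow> x \<sqinter> y \<sqinter> z = x \<sqinter> (y \<sqinter> z)"
    and compl_compl: "x \<in> A \<Longrightarrow> compl (compl x) = x"
    and huntington: "x \<in> A \<Longrightarrow> y \<in> A \<Longrightarrow> compl x = compl (x \<sqinter> y) \<sqinter> compl (x \<sqinter> compl y)"
begin

lemma meet_closed: "x \<in> A \<Longrightarrow> y \<in> A \<Longrightarrow> x \<sqinter> y \<in> A"
  and compl_closed: "x \<in> A \<Longrightarrow> compl x \<in> A"
  and carrier_nonempty: "A \<noteq> {}"
  using carrier_algebra by (auto simp: algebra_def)

lemma meet_left_commute: "x \<in> A \<Longrightarrow> y \<in> A \<Longrightarrow> z \<in> A \<Longrightarrow> x \<sqinter> (y \<sqinter> z) = y \<sqinter> (x \<sqinter> z)"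
  by (metis meet_assoc meet_comm)

lemma meet_medial:
  "a \<in> A \<Longrightarrow> b \<in> A \<Longrightarrow> c \<in> A \<Longrightarrow> d \<in> A \<Longrightarrow> a \<sqinter> b \<sqinter> (c \<sqinter> d) = a \<sqinter> c \<sqinter> (b \<sqinter> d)"
  by (simp add: meet_assoc meet_left_commute meet_closed)

definition join :: "'a \<Rightarrow> 'a \<Rightarrow> 'a" (infixl "\<squnion>" 65)
  where "x \<squnion> y = compl (compl x \<sqinter> compl y)"

lemma join_closed: "x \<in> A \<Longrightarrow> y \<in> A \<Longrightarrow> x \<squnion> y \<in> A"
  by (simp add: join_def meet_closed compl_closed)

lemma compl_join: "x \<in> A \<Longrightarrow> y \<in> A \<Longrightarrow> compl (x \<squnion> y) = compl x \<sqinter> compl y"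
  by (simp add: join_def compl_compl meet_closed compl_closed)

lemma compl_meet: "x \<in> A \<Longrightarrow> y \<in> A \<Longrightarrow> compl (x \<sqinter> y) = compl x \<squnion> compl y"
  by (simp add: join_def compl_compl)

lemma join_comm: "x \<in> A \<Longrightarrow> y \<in> A \<Longrightarrow> x \<squnion> y = y \<squnion> x"
  by (simp add: join_def meet_comm compl_closed)

lemma join_assoc: "x \<in> A \<Longrightarrow> y \<in> A \<Longrightarrow> z \<in> A \<Longrightarrow> x \<squnion> y \<squnion> z = x \<squnion> (y \<squnion> z)"
  by (simp add: join_def compl_compl meet_assoc meet_closed compl_closed)

lemma meet_split: "x \<in> A \<Longrightarrow> y \<in> A \<Longrightarrow> x = (x \<squnion> y) \<sqinter> (x \<squnion> compl y)"
  using huntington[of "compl x" y]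
  by (simp add: join_def compl_compl compl_closed meet_comm meet_closed)

lemma join_split: "x \<in> A \<Longrightarrow> y \<in> A \<Longrightarrow> x = x \<sqinter> y \<squnion> x \<sqinter> compl y"
  by (metis huntington join_def compl_compl)

lemma meet_compl_eq:
  assumes "x \<in> A" "y \<in> A"
  shows "x \<sqinter> compl x = y \<sqinter> compl y"
proof -
  have "x \<sqinter> compl x = (x \<squnion> y) \<sqinter> (x \<squnion> compl y) \<sqinter> ((compl x \<squnion> y) \<sqinter> (compl x \<squnion> compl y))"
    using assms meet_split compl_closed by metis
  also have "\<dots> = (y \<squnion> x) \<sqinter> (y \<squnion> compl x) \<sqinter> ((compl y \<squnion> x) \<sqinter> (compl y \<squnion> compl x))"
    using assms by (simp add: meet_medial join_comm join_closed compl_closed)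
  also have "\<dots> = y \<sqinter> compl y"
    using assms meet_split compl_closed by metis
  finally show ?thesis .
qed

definition zero :: 'a
  where "zero = (SOME x. x \<in> A) \<sqinter> compl (SOME x. x \<in> A)"

definition one :: 'a
  where "one = compl zero"

lemma meet_compl: "x \<in> A \<Longrightarrow> x \<sqinter> compl x = zero"
  unfolding zero_def by (metis meet_compl_eq carrier_nonempty some_in_eq)

lemma zero_closed: "zero \<in> A"
  and one_closed: "one \<in> A"
  unfolding one_def zero_def by (metis compl_closed meet_closed carrier_nonempty some_in_eq)+

lemma compl_zero: "compl zero = one"
  by (simp add: one_def)

lemma compl_one: "compl one = zero"
  by (simp add: one_def compl_compl zero_closed)

lemma join_compl: "x \<in> A \<Longrightarrow> x \<squnion> compl x = one"
  by (simp add: join_def one_def compl_compl meet_comm compl_closed meet_compl)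

lemma meet_self_join_zero: "x \<in> A \<Longrightarrow> x = x \<sqinter> x \<squnion> zero"
  using join_split meet_compl by metis

text \<open>Before idempotence is known, splitting x along itself only gives x = (x \<squnion> x) \<sqinter> one.
  For x = zero the extra fact zero \<squnion> one = one suffices to conclude; the resulting
  one \<sqinter> one = one then turns that identity into idempotence in general.\<close>
lemma zero_meet_zero: "zero \<sqinter> zero = zero"
proof -
  let ?e = "zero \<sqinter> zero"
  have e: "?e \<in> A" by (simp add: meet_closed zero_closed)
  have "?e \<squnion> one = ?e \<squnion> (zero \<squnion> one)"
    using join_compl[OF zero_closed] by (simp add: compl_zero)
  also have "\<dots> = (?e \<squnion> zero) \<squnion> one"
    by (simp add: join_assoc e zero_closed one_closed)
  also have "\<dots> = one"
    using join_compl[OF zero_closed] meet_self_join_zero[OF zero_closed] by (simp add: compl_zero)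
  finally have e_one: "?e \<squnion> one = one" .
  have "?e = (?e \<squnion> zero) \<sqinter> (?e \<squnion> one)"
    using meet_split[OF e zero_closed] by (simp add: compl_zero)
  also have "\<dots> = zero \<sqinter> one"
    using e_one meet_self_join_zero[OF zero_closed] by simp
  also have "\<dots> = zero"
    using meet_compl[OF zero_closed] by (simp add: compl_zero)
  finally show ?thesis .
qed

lemma one_meet_one: "one \<sqinter> one = one"
proof -
  have "zero \<squnion> zero = zero"
    using meet_self_join_zero[OF zero_closed] by (simp add: zero_meet_zero)
  then show ?thesis
    by (metis compl_join one_def zero_closed)
qed

lemma meet_one: "x \<in> A \<Longrightarrow> x \<sqinter> one = x"
  by (metis join_compl join_closed meet_assoc meet_split one_closed one_meet_one)

lemma join_idem: "x \<in> A \<Longrightarrow> x \<squnion> x = x"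
  by (metis join_compl join_closed meet_one meet_split)

lemma meet_idem: "x \<in> A \<Longrightarrow> x \<sqinter> x = x"
  by (metis compl_closed compl_compl compl_join join_idem)

lemma join_zero: "x \<in> A \<Longrightarrow> x \<squnion> zero = x"
  by (simp add: join_def compl_closed compl_zero meet_one compl_compl)

lemma meet_zero:
  assumes "x \<in> A" shows "x \<sqinter> zero = zero"
proof -
  have "x \<sqinter> zero = x \<sqinter> x \<sqinter> compl x"
    using assms by (simp add: meet_assoc meet_compl compl_closed)
  then show ?thesis
    using assms by (simp add: meet_idem meet_compl)
qed

lemma meet_join_absorb:
  assumes x: "x \<in> A" and y: "y \<in> A" shows "x \<sqinter> (x \<squnion> y) = x"
proof -
  let ?p = "x \<squnion> y" and ?q = "x \<squnion> compl y"
  have p: "?p \<in> A" and q: "?q \<in> A" using x y by (simp_all add: join_closed compl_closed)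
  have "x \<sqinter> ?p = ?p \<sqinter> ?p \<sqinter> ?q"
    using meet_split[OF x y] p q by (metis meet_assoc meet_comm)
  also have "\<dots> = x"
    using meet_split[OF x y] p by (simp add: meet_idem)
  finally show ?thesis .
qed

lemma meet_self_distrib:
  "x \<in> A \<Longrightarrow> y \<in> A \<Longrightarrow> z \<in> A \<Longrightarrow> x \<sqinter> (y \<sqinter> z) = x \<sqinter> y \<sqinter> (x \<sqinter> z)"
  using meet_medial[of x x y z] by (simp add: meet_idem)

lemma meet_compl_meet:
  assumes x: "x \<in> A" and y: "y \<in> A"
  shows "x \<sqinter> compl (x \<sqinter> y) = x \<sqinter> compl y"
proof -
  let ?a = "x \<sqinter> compl (x \<sqinter> y)"
  have a: "?a \<in> A" using x y by (simp add: meet_closed compl_closed)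
  have "?a \<sqinter> y = x \<sqinter> (y \<sqinter> compl (x \<sqinter> y))"
    using x y meet_comm[of y "compl (x \<sqinter> y)"] by (simp add: meet_assoc meet_closed compl_closed)
  also have "\<dots> = x \<sqinter> y \<sqinter> compl (x \<sqinter> y)"
    using x y by (simp add: meet_assoc meet_closed compl_closed)
  also have "\<dots> = zero"
    using x y by (simp add: meet_compl meet_closed)
  finally have a_y: "?a \<sqinter> y = zero" .
  have "?a \<sqinter> compl y = x \<sqinter> (compl y \<sqinter> compl (x \<sqinter> y))"
    using x y meet_comm[of "compl y" "compl (x \<sqinter> y)"]
    by (simp add: meet_assoc meet_closed compl_closed)
  also have "\<dots> = x \<sqinter> (compl y \<sqinter> (compl y \<squnion> compl x))"
    using x y by (simp add: compl_meet join_comm compl_closed)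
  also have "\<dots> = x \<sqinter> compl y"
    using x y by (simp add: meet_join_absorb compl_closed)
  finally have a_cy: "?a \<sqinter> compl y = x \<sqinter> compl y" .
  have "?a = zero \<squnion> x \<sqinter> compl y"
    using join_split[OF a y] a_y a_cy by simp
  also have "\<dots> = x \<sqinter> compl y"
    using x y join_comm[OF zero_closed, of "x \<sqinter> compl y"] join_zero[of "x \<sqinter> compl y"]
    by (simp add: meet_closed compl_closed)
  finally show ?thesis .
qed

definition cond :: "'a \<Rightarrow> 'a \<Rightarrow> 'a \<Rightarrow> 'a"
  where "cond x a b = x \<sqinter> a \<squnion> compl x \<sqinter> b"

lemma cond_closed: "x \<in> A \<Longrightarrow> a \<in> A \<Longrightarrow> b \<in> A \<Longrightarrow> cond x a b \<in> A"
  by (simp add: cond_def join_closed meet_closed compl_closed)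

lemma cond_eqI:
  assumes "x \<in> A" "w \<in> A" "x \<sqinter> w = x \<sqinter> a" "compl x \<sqinter> w = compl x \<sqinter> b"
  shows "w = cond x a b"
proof -
  have "w = w \<sqinter> x \<squnion> w \<sqinter> compl x"
    using assms by (simp add: join_split)
  also have "\<dots> = x \<sqinter> w \<squnion> compl x \<sqinter> w"
    using assms by (simp add: meet_comm compl_closed)
  finally show ?thesis
    using assms by (simp add: cond_def)
qed

lemma meet_cond:
  assumes x: "x \<in> A" and a: "a \<in> A" and b: "b \<in> A"
  shows "x \<sqinter> cond x a b = x \<sqinter> a"
proof -
  let ?u = "compl (x \<sqinter> a) \<sqinter> compl (compl x \<sqinter> b)"
  have u: "?u \<in> A" using x a b by (simp add: meet_closed compl_closed)
  have x_b: "x \<sqinter> compl (compl x \<sqinter> b) = x"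
    using x b by (simp add: compl_meet compl_compl meet_join_absorb compl_closed)
  have "x \<sqinter> ?u = compl (x \<sqinter> a) \<sqinter> (x \<sqinter> compl (compl x \<sqinter> b))"
    using x a b by (simp add: meet_left_commute meet_closed compl_closed)
  also have "\<dots> = x \<sqinter> compl a"
    using x a x_b meet_compl_meet[OF x a] by (simp add: meet_comm meet_closed compl_closed)
  finally have "x \<sqinter> ?u = x \<sqinter> compl a" .
  then have "x \<sqinter> compl (x \<sqinter> ?u) = x \<sqinter> a"
    using meet_compl_meet[OF x] a by (simp add: compl_compl compl_closed)
  then show ?thesis
    using meet_compl_meet[OF x u] by (simp add: cond_def join_def)
qed

lemma cond_compl: "x \<in> A \<Longrightarrow> a \<in> A \<Longrightarrow> b \<in> A \<Longrightarrow> cond (compl x) b a = cond x a b"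
  by (simp add: cond_def compl_compl join_comm meet_closed compl_closed)

lemma compl_meet_cond: "x \<in> A \<Longrightarrow> a \<in> A \<Longrightarrow> b \<in> A \<Longrightarrow> compl x \<sqinter> cond x a b = compl x \<sqinter> b"
  by (metis cond_compl meet_cond compl_closed)

lemma cond_meet_cond:
  assumes "x \<in> A" "a \<in> A" "b \<in> A" "c \<in> A" "d \<in> A"
  shows "cond x a b \<sqinter> cond x c d = cond x (a \<sqinter> c) (b \<sqinter> d)"
proof (rule cond_eqI)
  let ?p = "cond x a b" and ?q = "cond x c d"
  have p: "?p \<in> A" and q: "?q \<in> A" using assms by (simp_all add: cond_closed)
  have "x \<sqinter> (?p \<sqinter> ?q) = x \<sqinter> ?p \<sqinter> (x \<sqinter> ?q)"
    using assms p q by (intro meet_self_distrib)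
  also have "\<dots> = x \<sqinter> (a \<sqinter> c)"
    using assms by (simp add: meet_cond meet_self_distrib[symmetric])
  finally show "x \<sqinter> (?p \<sqinter> ?q) = x \<sqinter> (a \<sqinter> c)" .
  have "compl x \<sqinter> (?p \<sqinter> ?q) = compl x \<sqinter> ?p \<sqinter> (compl x \<sqinter> ?q)"
    using assms p q by (intro meet_self_distrib compl_closed)
  also have "\<dots> = compl x \<sqinter> (b \<sqinter> d)"
    using assms by (simp add: compl_meet_cond meet_self_distrib[symmetric] compl_closed)
  finally show "compl x \<sqinter> (?p \<sqinter> ?q) = compl x \<sqinter> (b \<sqinter> d)" .
qed (use assms in \<open>simp_all add: meet_closed cond_closed\<close>)

lemma compl_cond:
  assumes "x \<in> A" "a \<in> A" "b \<in> A"
  shows "compl (cond x a b) = cond x (compl a) (compl b)"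
proof (rule cond_eqI)
  let ?p = "cond x a b"
  have p: "?p \<in> A" using assms by (simp add: cond_closed)
  have "x \<sqinter> compl ?p = x \<sqinter> compl (x \<sqinter> ?p)"
    using assms p by (simp add: meet_compl_meet)
  also have "\<dots> = x \<sqinter> compl a"
    using assms by (simp add: meet_cond meet_compl_meet)
  finally show "x \<sqinter> compl ?p = x \<sqinter> compl a" .
  have "compl x \<sqinter> compl ?p = compl x \<sqinter> compl (compl x \<sqinter> ?p)"
    using assms p by (simp add: meet_compl_meet compl_closed)
  also have "\<dots> = compl x \<sqinter> compl b"
    using assms by (simp add: compl_meet_cond meet_compl_meet compl_closed)
  finally show "compl x \<sqinter> compl ?p = compl x \<sqinter> compl b" .
qed (use assms in \<open>simp_all add: compl_closed cond_closed\<close>)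

lemma cond_same: "x \<in> A \<Longrightarrow> a \<in> A \<Longrightarrow> cond x a a = a"
  using cond_eqI[of x a a a] by simp

lemma cond_one_zero: "x \<in> A \<Longrightarrow> cond x one zero = x"
  using meet_compl[of "compl x"]
  by (intro cond_eqI[symmetric])
    (simp_all add: meet_idem meet_one meet_zero compl_closed compl_compl)

lemma eval_closed: "(\<And>i. v i \<in> A) \<Longrightarrow> eval (\<sqinter>) compl v t \<in> A"
  by (induction t) (simp_all add: meet_closed compl_closed)

lemma eval_shannon:
  assumes v: "\<And>i. v i \<in> A"
  shows "eval (\<sqinter>) compl v t
    = cond (v k) (eval (\<sqinter>) compl (v(k := one)) t) (eval (\<sqinter>) compl (v(k := zero)) t)"
proof -
  have v1: "(v(k := one)) i \<in> A" and v0: "(v(k := zero)) i \<in> A" for i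
    using v by (simp_all add: one_closed zero_closed)
  show ?thesis
  proof (induction t)
    case (Var i)
    then show ?case
      using v by (simp add: cond_one_zero cond_same)
  next
    case (Meet s t)
    then show ?case
      using v eval_closed[OF v1] eval_closed[OF v0] by (simp add: cond_meet_cond)
  next
    case (Cmp t)
    then show ?case
      using v eval_closed[OF v1] eval_closed[OF v0] by (simp add: compl_cond)
  qed
qed

lemma eval_two_valued:
  assumes "\<And>i. v i \<in> {zero, one}"
  shows "eval (\<sqinter>) compl v t = (if eval (\<and>) Not (\<lambda>i. v i = one) t then one else zero)"
proof (induction t)
  case (Var i)
  then show ?case using assms by auto
next
  case (Meet s t)
  then show ?case
    by (simp add: meet_idem meet_one meet_zero zero_closed one_closed meet_comm[of zero one])
next
  case (Cmp t)
  then show ?case by (simp add: compl_one compl_zero)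
qed

lemma eval_eq_if_two_valued_outside:
  assumes bool_eq: "\<And>w. eval (\<and>) Not w s = eval (\<and>) Not w t" and "finite F"
  shows "(\<And>i. v i \<in> A) \<Longrightarrow> (\<And>i. i \<notin> F \<Longrightarrow> v i \<in> {zero, one})
    \<Longrightarrow> eval (\<sqinter>) compl v s = eval (\<sqinter>) compl v t"
  using \<open>finite F\<close>
proof (induction F arbitrary: v rule: finite_induct)
  case empty
  then show ?case
    using bool_eq by (simp add: eval_two_valued)
next
  case (insert k F)
  have "eval (\<sqinter>) compl (v(k := b)) s = eval (\<sqinter>) compl (v(k := b)) t" if "b \<in> {zero, one}" for b
    using insert.prems that zero_closed one_closed by (intro insert.IH) auto
  then show ?case
    using insert.prems by (simp add: eval_shannon[of v _ k])
qed

lemma eval_eq_if_bool_eval_eq: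
  assumes bool_eq: "\<And>w. eval (\<and>) Not w s = eval (\<and>) Not w t" and v: "\<And>i. v i \<in> A"
  shows "eval (\<sqinter>) compl v s = eval (\<sqinter>) compl v t"
proof -
  define v' where "v' = (\<lambda>i. if i \<in> vars s \<union> vars t then v i else one)"
  have "eval (\<sqinter>) compl v' s = eval (\<sqinter>) compl v' t"
    by (rule eval_eq_if_two_valued_outside[OF bool_eq, of "vars s \<union> vars t"])
      (auto simp: v'_def v one_closed finite_vars)
  moreover have "eval (\<sqinter>) compl v s = eval (\<sqinter>) compl v' s"
    by (rule eval_cong) (simp add: v'_def)
  moreover have "eval (\<sqinter>) compl v t = eval (\<sqinter>) compl v' t"
    by (rule eval_cong) (simp add: v'_def)
  ultimately show ?thesis by simp
qed

lemma sat_if_bool_sat: "sat (UNIV :: bool set) (\<and>) Not e \<Longrightarrow> sat A (\<sqinter>) compl e"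
  unfolding sat_def by (auto intro: eval_eq_if_bool_eval_eq)

end

locale a9_j4_j5_algebra =
  fixes A :: "'a set" and meet :: "'a \<Rightarrow> 'a \<Rightarrow> 'a" (infixl "\<sqinter>" 70) and compl :: "'a \<Rightarrow> 'a"
  assumes carrier_algebra: "algebra A (\<sqinter>) compl"
    and a9: "x \<in> A \<Longrightarrow> y \<in> A \<Longrightarrow> z \<in> A \<Longrightarrow> x \<sqinter> (y \<sqinter> z) = z \<sqinter> (y \<sqinter> x)"
    and j4: "x \<in> A \<Longrightarrow> compl (compl x) = x"
    and j5: "x \<in> A \<Longrightarrow> y \<in> A \<Longrightarrow> compl x = compl (x \<sqinter> y) \<sqinter> compl (x \<sqinter> compl y)"
begin

lemma carrier_closed: "x \<in> A \<Longrightarrow> y \<in> A \<Longrightarrow> x \<sqinter> y \<in> A" "x \<in> A \<Longrightarrow> compl x \<in> A"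
  using carrier_algebra by (auto simp: algebra_def)

lemma j5_swap: "x \<in> A \<Longrightarrow> y \<in> A \<Longrightarrow> compl x = compl (x \<sqinter> compl y) \<sqinter> compl (x \<sqinter> y)"
  using j5[of x "compl y"] by (simp add: j4 carrier_closed)

lemma j5_meet:
  "x \<in> A \<Longrightarrow> y \<in> A \<Longrightarrow> z \<in> A \<Longrightarrow> compl (x \<sqinter> compl y) \<sqinter> (compl (x \<sqinter> y) \<sqinter> z) = z \<sqinter> compl x"
  using a9[of "compl (x \<sqinter> compl y)" "compl (x \<sqinter> y)" z] j5[of x y] by (simp add: carrier_closed)

lemma j5_swap_meet:
  "x \<in> A \<Longrightarrow> y \<in> A \<Longrightarrow> z \<in> A \<Longrightarrow> compl (x \<sqinter> y) \<sqinter> (compl (x \<sqinter> compl y) \<sqinter> z) = z \<sqinter> compl x"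
  using a9[of "compl (x \<sqinter> y)" "compl (x \<sqinter> compl y)" z] j5_swap[of x y] by (simp add: carrier_closed)

lemma compl_meet_rotate:
  assumes x: "x \<in> A" and y: "y \<in> A" and z: "z \<in> A"
  shows "compl (x \<sqinter> y) \<sqinter> z \<sqinter> compl x = compl x \<sqinter> (z \<sqinter> compl (x \<sqinter> y))"
proof -
  let ?p = "compl (x \<sqinter> y)" and ?q = "compl (x \<sqinter> compl y)"
  have "?p \<sqinter> z \<sqinter> compl x = ?p \<sqinter> (?q \<sqinter> (?p \<sqinter> z))"
    using j5_swap_meet[OF x y, of "?p \<sqinter> z"] x y z by (simp add: carrier_closed)
  also have "\<dots> = ?p \<sqinter> (z \<sqinter> compl x)"
    using j5_meet[OF x y z] by simp
  also have "\<dots> = compl x \<sqinter> (z \<sqinter> ?p)"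
    using x y z by (simp add: a9 carrier_closed)
  finally show ?thesis .
qed

text \<open>The witness a \<sqinter> a makes the first J5 factor of compl b start with a, as
  compl_meet_rotate requires.\<close>
lemma compl_meet_comm:
  assumes a: "a \<in> A" and b: "b \<in> A"
  shows "compl a \<sqinter> compl b = compl b \<sqinter> compl a"
proof -
  let ?s = "compl (a \<sqinter> (a \<sqinter> b))" and ?t = "compl (b \<sqinter> compl (a \<sqinter> a))"
  have "b \<sqinter> (a \<sqinter> a) = a \<sqinter> (a \<sqinter> b)"
    using a b by (simp add: a9)
  then have b_st: "compl b = ?s \<sqinter> ?t" and b_ts: "compl b = ?t \<sqinter> ?s"
    using j5[of b "a \<sqinter> a"] j5_swap[of b "a \<sqinter> a"] a b by (simp_all add: carrier_closed)
  have "compl b \<sqinter> compl a = ?s \<sqinter> ?t \<sqinter> compl a"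
    by (simp flip: b_st)
  also have "\<dots> = compl a \<sqinter> (?t \<sqinter> ?s)"
    using a b by (simp add: compl_meet_rotate carrier_closed)
  finally show ?thesis
    by (simp flip: b_ts)
qed

lemma meet_comm: "x \<in> A \<Longrightarrow> y \<in> A \<Longrightarrow> x \<sqinter> y = y \<sqinter> x"
  using compl_meet_comm[of "compl x" "compl y"] by (simp add: j4 carrier_closed)

lemma meet_assoc:
  assumes "x \<in> A" "y \<in> A" "z \<in> A"
  shows "x \<sqinter> y \<sqinter> z = x \<sqinter> (y \<sqinter> z)"
proof -
  have "x \<sqinter> y \<sqinter> z = z \<sqinter> (x \<sqinter> y)"
    using assms by (simp add: meet_comm carrier_closed)
  also have "\<dots> = y \<sqinter> (z \<sqinter> x)"
    using assms by (simp add: a9 meet_comm)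
  also have "\<dots> = x \<sqinter> (y \<sqinter> z)"
    using assms a9[of y z x] by (simp add: meet_comm carrier_closed)
  finally show ?thesis .
qed

sublocale huntington_algebra
  by unfold_locales (fact carrier_algebra meet_comm meet_assoc j4 j5)+

end

lemma sat_A9_iff: "sat A m c A9 \<longleftrightarrow> (\<forall>x\<in>A. \<forall>y\<in>A. \<forall>z\<in>A. m x (m y z) = m z (m y x))"
proof
  assume sat: "sat A m c A9"
  show "\<forall>x\<in>A. \<forall>y\<in>A. \<forall>z\<in>A. m x (m y z) = m z (m y x)"
  proof (intro ballI)
    fix x y z assume "x \<in> A" "y \<in> A" "z \<in> A"
    then show "m x (m y z) = m z (m y x)"
      using sat[unfolded sat_def, rule_format, of "\<lambda>i. if i = 0 then x else if i = 1 then y else z"]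
      by (simp add: A9_def)
  qed
qed (simp add: sat_def A9_def)

lemma sat_J4_iff: "sat A m c J4 \<longleftrightarrow> (\<forall>x\<in>A. c (c x) = x)"
proof
  assume sat: "sat A m c J4"
  show "\<forall>x\<in>A. c (c x) = x"
    using sat[unfolded sat_def, rule_format, of "\<lambda>i. _"] by (simp add: J4_def)
qed (simp add: sat_def J4_def)

lemma sat_J5_iff: "sat A m c J5 \<longleftrightarrow> (\<forall>x\<in>A. \<forall>y\<in>A. c x = m (c (m x y)) (c (m x (c y))))"
proof
  assume sat: "sat A m c J5"
  show "\<forall>x\<in>A. \<forall>y\<in>A. c x = m (c (m x y)) (c (m x (c y)))"
  proof (intro ballI)
    fix x y assume "x \<in> A" "y \<in> A"
    then show "c x = m (c (m x y)) (c (m x (c y)))"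
      using sat[unfolded sat_def, rule_format, of "\<lambda>i. if i = 0 then x else y"]
      by (simp add: J5_def)
  qed
qed (simp add: sat_def J5_def)

lemma models_A9_J4_J5_iff:
  "algebra A m c \<Longrightarrow> models A m c {A9, J4, J5} \<longleftrightarrow> a9_j4_j5_algebra A m c"
  unfolding models_def a9_j4_j5_algebra_def
  by (simp only: ball_simps sat_A9_iff sat_J4_iff sat_J5_iff) blast

lemma bool_models_A9_J4_J5: "models (UNIV :: bool set) (\<and>) Not {A9, J4, J5}"
  by (auto simp: models_def sat_A9_iff sat_J4_iff sat_J5_iff)

lemma defines_BA_A9_J4_J5: "defines_BA TYPE('a) {A9, J4, J5}"
  unfolding defines_BA_def
proof (intro allI impI)
  fix A :: "'a set" and m c
  assume alg: "algebra A m c"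
  show "models A m c {A9, J4, J5} \<longleftrightarrow> in_BA A m c"
  proof
    assume "models A m c {A9, J4, J5}"
    then interpret a9_j4_j5_algebra A m c
      using models_A9_J4_J5_iff[OF alg] by simp
    show "in_BA A m c"
      unfolding in_BA_def using alg sat_if_bool_sat by blast
  next
    assume "in_BA A m c"
    then show "models A m c {A9, J4, J5}"
      using bool_models_A9_J4_J5 unfolding in_BA_def models_def by blast
  qed
qed

lemma independent_A9_J4_J5: "independent {A9, J4, J5}"
proof -
  let ?B = "{0, 1 :: nat}"
  have "algebra ?B (\<lambda>x y. x) id \<and> sat ?B (\<lambda>x y. x) id J4 \<and> sat ?B (\<lambda>x y. x) id J5
    \<and> \<not> sat ?B (\<lambda>x y. x) id A9"
    by (auto simp: algebra_def sat_A9_iff sat_J4_iff sat_J5_iff)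
  moreover have "algebra ?B (\<lambda>x y. 0) (\<lambda>x. 0) \<and> sat ?B (\<lambda>x y. 0) (\<lambda>x. 0) A9
    \<and> sat ?B (\<lambda>x y. 0) (\<lambda>x. 0) J5 \<and> \<not> sat ?B (\<lambda>x y. 0) (\<lambda>x. 0) J4"
    by (auto simp: algebra_def sat_A9_iff sat_J4_iff sat_J5_iff)
  moreover have "algebra ?B (\<lambda>x y. 0) id \<and> sat ?B (\<lambda>x y. 0) id A9 \<and> sat ?B (\<lambda>x y. 0) id J4
    \<and> \<not> sat ?B (\<lambda>x y. 0) id J5"
    by (auto simp: algebra_def sat_A9_iff sat_J4_iff sat_J5_iff)
  ultimately show ?thesis
    unfolding independent_def models_def by (auto simp: A9_def J4_def J5_def)
qed

theorem theorem7p1: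
  shows "defines_BA TYPE('a) {A9, J4, J5} \<and> independent {A9, J4, J5}
         \<and> card {A9, J4, J5} = 3"
  using defines_BA_A9_J4_J5 independent_A9_J4_J5 by (simp add: A9_def J4_def J5_def)

end
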